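(* Let $p\ge 2$, $0\le t\le1$ and $u>0$. Then the $p^2\times p^2$ real matrix $B$ defined below has rank exactly $p^2-1$.
   Context: Let $p\ge 2$ be an integer, $0\le t\le 1$ and $u>0$. Consider $p^2$ unknowns $p_{i,j}$, $1\le i,j\le p$; these represent the DASEP$(3,p,2)$ stationary probabilities $\mathrm{Pd}(0,i,j)$. For $1\le i,j\le p$ define the linear form $$A_{i,j}=\big(c_{i,j}+[i>1]+[j>1]+u[i<p]+u[j<p]\big)p_{i,j}-d_{i,j}\,p_{j,i}-[i<p]\,p_{i+1,j}-[j<p]\,p_{i,j+1}-u[i>1]\,p_{i-1,j}-u[j>1]\,p_{i,j-1}.$$ Here $[\cdot]$ is the Iverson bracket. The coefficients are $c_{i,j}=2+t$ and $d_{i,j}=1+2t$ if $i<j$; $c_{i,j}=1+2t$ and $d_{i,j}=2+t$ if $i>j$; and $c_{i,i}=d_{i,i}=0$. For example, for $1<i<j<p$ this reads $A_{i,j}=(4+t+2u)p_{i,j}-(1+2t)p_{j,i}-p_{i+1,j}-p_{i,j+1}-up_{i-1,j}-up_{i,j-1}$. For $1<j<i<p$ it reads $A_{i,j}=(3+2t+2u)p_{i,j}-(2+t)p_{j,i}-p_{i+1,j}-p_{i,j+1}-up_{i-1,j}-up_{i,j-1}$. For $i=j=1$ it reads $A_{1,1}=2u\,p_{1,1}-p_{2,1}-p_{1,2}$. The matrix $B$ has rows and columns indexed by pairs, with entries $B_{p(i_1-1)+j_1,\;p(i_2-1)+j_2}$ equal to the coefficient of $p_{i_1,j_1}$ in $A_{i_2,j_2}$.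 *)

theory Defs
  imports "Jordan_Normal_Form.DL_Rank"
begin

definition iv :: "bool \<Rightarrow> real" where "iv b = (if b then 1 else 0)"

definition cc :: "real \<Rightarrow> nat \<Rightarrow> nat \<Rightarrow> real" where
  "cc t i j = (if i < j then 2 + t else if j < i then 1 + 2*t else 0)"

definition dd :: "real \<Rightarrow> nat \<Rightarrow> nat \<Rightarrow> real" where
  "dd t i j = (if i < j then 1 + 2*t else if j < i then 2 + t else 0)"

(* coeffA p t u i j k l = coefficient of the unknown p_{k,l} in the linear form A_{i,j}
   (all indices 1-based, 1 <= i,j,k,l <= p). Contributions from coinciding unknowns add up
   (only relevant for i = j, where d_{i,i} = 0 anyway). *)
definition coeffA :: "nat \<Rightarrow> real \<Rightarrow> real \<Rightarrow> nat \<Rightarrow> nat \<Rightarrow> nat \<Rightarrow> nat \<Rightarrow> real" where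
  "coeffA p t u i j k l =
     iv (k = i \<and> l = j) * (cc t i j + iv (i > 1) + iv (j > 1) + u * iv (i < p) + u * iv (j < p))
   - iv (k = j \<and> l = i) * dd t i j
   - iv (i < p \<and> k = i + 1 \<and> l = j)
   - iv (j < p \<and> k = i \<and> l = j + 1)
   - u * iv (i > 1 \<and> k + 1 = i \<and> l = j)
   - u * iv (j > 1 \<and> k = i \<and> l + 1 = j)"

(* The p^2 x p^2 matrix B, 0-based: row index r corresponds to (i1,j1) with
   r = p*(i1-1) + (j1-1), column index c to (i2,j2) likewise;
   B(r,c) = coefficient of p_{i1,j1} in A_{i2,j2}. *)
definition matB :: "nat \<Rightarrow> real \<Rightarrow> real \<Rightarrow> real mat" where
  "matB p t u = mat (p^2) (p^2)
     (\<lambda>(r, c). coeffA p t u (c div p + 1) (c mod p + 1) (r div p + 1) (r mod p + 1))"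

end

theory Submission
  imports Defs "Jordan_Normal_Form.DL_Rank_Submatrix"
begin

text \<open>The matrix \<open>B\<close> is a Z-matrix with zero row sums: its off-diagonal entries are \<open>\<le> 0\<close>, and
  the diagonal coefficient of each unknown in its own balance equation equals the total weight it
  carries into the other equations (note \<open>c\<^sub>i\<^sub>,\<^sub>j = d\<^sub>j\<^sub>,\<^sub>i\<close>). Hence the all-ones vector lies in its kernel and
  \<open>rank B \<le> p\<^sup>2 - 1\<close>. Conversely, ordering the pairs lexicographically, every pair except the last
  one \<open>(p, p)\<close> has a strictly negative entry \<open>-u\<close> in a later column (its right or lower
  neighbour), and a discrete maximum principle shows that the leading \<open>(p\<^sup>2 - 1)\<close>-minor is then
  nonsingular.\<close>

lemma pick_lessThan: "i < m \<Longrightarrow> pick {..<m} i = i"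
proof -
  assume "i < m"
  then have "{a \<in> {..<m}. a < i} = {..<i}" by auto
  then show ?thesis using pick_card_in_set[of i "{..<m}"] \<open>i < m\<close> by simp
qed

lemma det_zero_if_row_sums_zero:
  fixes B :: "'a :: field mat"
  assumes B: "B \<in> carrier_mat n n" and "n > 0"
    and row_sums: "\<And>r. r < n \<Longrightarrow> (\<Sum>c<n. B $$ (r, c)) = 0"
  shows "det B = 0"
proof -
  let ?one = "vec n (\<lambda>_. 1) :: 'a vec"
  have "B *\<^sub>v ?one = 0\<^sub>v n"
    using B row_sums by (intro eq_vecI) (auto simp: scalar_prod_def lessThan_atLeast0)
  moreover have "?one \<noteq> 0\<^sub>v n"
    using \<open>n > 0\<close> by (metis index_vec index_zero_vec(1) zero_neq_one)
  ultimately show ?thesis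
    using det_0_iff_vec_prod_zero_field[OF B] vec_carrier by blast
qed

lemma Z_matrix_maximum_principle:
  fixes B :: "real mat" and w :: "nat \<Rightarrow> real"
  assumes offdiag: "\<And>r c. r < m \<Longrightarrow> c < n \<Longrightarrow> c \<noteq> r \<Longrightarrow> B $$ (r, c) \<le> 0"
    and row_sums: "\<And>r. r < m \<Longrightarrow> (\<Sum>c<n. B $$ (r, c)) \<ge> 0"
    and later_neg: "\<And>r. r < m \<Longrightarrow> \<exists>c. r < c \<and> c < n \<and> B $$ (r, c) < 0"
    and outside: "\<And>c. m \<le> c \<Longrightarrow> c < n \<Longrightarrow> w c = 0"
    and harmonic: "\<And>r. r < m \<Longrightarrow> (\<Sum>c<n. B $$ (r, c) * w c) = 0"
    and "c < n"
  shows "w c = 0"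
proof (rule ccontr)
  assume "w c \<noteq> 0"
  define a where "a = Max ((\<lambda>c. \<bar>w c\<bar>) ` {..<n})"
  define r where "r = Max {c. c < n \<and> \<bar>w c\<bar> = a}"
  have a_ge: "\<bar>w c\<bar> \<le> a" if "c < n" for c
    unfolding a_def using that by (intro Max_ge) auto
  have "a > 0" using a_ge[OF \<open>c < n\<close>] \<open>w c \<noteq> 0\<close> by linarith
  have "a \<in> (\<lambda>c. \<bar>w c\<bar>) ` {..<n}"
    unfolding a_def using \<open>c < n\<close> by (intro Max_in) auto
  then have "r \<in> {c. c < n \<and> \<bar>w c\<bar> = a}"
    unfolding r_def by (intro Max_in) auto
  then have "r < n" and "\<bar>w r\<bar> = a" by auto
  have beyond_r: "\<bar>w c\<bar> < a" if "r < c" "c < n" for c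
    using that a_ge[of c] Max_ge[of "{c. c < n \<and> \<bar>w c\<bar> = a}" c]
    unfolding r_def by fastforce
  have "r < m" using outside[of r] \<open>r < n\<close> \<open>\<bar>w r\<bar> = a\<close> \<open>a > 0\<close> by force
  obtain c0 where c0: "r < c0" "c0 < n" "B $$ (r, c0) < 0" using later_neg[OF \<open>r < m\<close>] by blast
  define s where "s = sgn (w r)"
  have "s * w r = a"
    unfolding s_def using \<open>\<bar>w r\<bar> = a\<close> by (metis abs_sgn mult.commute)
  have "\<bar>s\<bar> = 1"
    unfolding s_def using \<open>\<bar>w r\<bar> = a\<close> \<open>a > 0\<close> by (simp add: abs_sgn_eq)
  have dev_le: "s * w c - a \<le> 0" if "c < n" for c
    using a_ge[OF that] \<open>\<bar>s\<bar> = 1\<close> abs_ge_self[of "s * w c"] by (simp add: abs_mult)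
  txt \<open>Row \<open>r\<close> tested against \<open>s w - a\<close>, which has a strict maximum \<open>0\<close> at \<open>r\<close> among the
    columns \<open>\<ge> r\<close>: the sum is \<open>\<le> 0\<close> by harmonicity, but every summand is \<open>\<ge> 0\<close> and the
    one at \<open>c0\<close> is positive.\<close>
  have "(\<Sum>c<n. B $$ (r, c) * (s * w c - a)) = s * (\<Sum>c<n. B $$ (r, c) * w c) - a * (\<Sum>c<n. B $$ (r, c))"
    by (simp add: algebra_simps sum_subtractf sum_distrib_left)
  also have "\<dots> \<le> 0" using harmonic[OF \<open>r < m\<close>] row_sums[OF \<open>r < m\<close>] \<open>a > 0\<close> by simp
  finally have "(\<Sum>c<n. B $$ (r, c) * (s * w c - a)) \<le> 0" .
  moreover have "(\<Sum>c<n. B $$ (r, c) * (s * w c - a)) > 0"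
  proof (rule sum_pos2)
    show "c0 \<in> {..<n}" using c0 by simp
    have "s * w c0 < a"
      using beyond_r[OF c0(1,2)] \<open>\<bar>s\<bar> = 1\<close> abs_ge_self[of "s * w c0"] by (simp add: abs_mult)
    then show "0 < B $$ (r, c0) * (s * w c0 - a)" using c0 by (simp add: mult_neg_neg)
    show "0 \<le> B $$ (r, c) * (s * w c - a)" if "c \<in> {..<n}" for c
      using that offdiag[OF \<open>r < m\<close>, of c] dev_le[of c] \<open>s * w r = a\<close>
      by (cases "c = r") (auto intro: mult_nonpos_nonpos)
  qed simp
  ultimately show False by simp
qed

lemma card_lessThan_below: "m \<le> n \<Longrightarrow> card {i. i < n \<and> i \<in> {..<m}} = m"
proof -
  assume "m \<le> n"
  then have "{i. i < n \<and> i \<in> {..<m}} = {..<m}" by auto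
  then show ?thesis by simp
qed

lemma Z_matrix_leading_minor_det_nonzero:
  fixes B :: "real mat"
  assumes B: "B \<in> carrier_mat n n" and "m \<le> n"
    and offdiag: "\<And>r c. r < m \<Longrightarrow> c < n \<Longrightarrow> c \<noteq> r \<Longrightarrow> B $$ (r, c) \<le> 0"
    and row_sums: "\<And>r. r < m \<Longrightarrow> (\<Sum>c<n. B $$ (r, c)) \<ge> 0"
    and later_neg: "\<And>r. r < m \<Longrightarrow> \<exists>c. r < c \<and> c < n \<and> B $$ (r, c) < 0"
  shows "det (submatrix B {..<m} {..<m}) \<noteq> 0"
proof
  let ?M = "submatrix B {..<m} {..<m}"
  have dims: "card {i. i < dim_row B \<and> i \<in> {..<m}} = m" "card {i. i < dim_col B \<and> i \<in> {..<m}} = m"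
    using B \<open>m \<le> n\<close> card_lessThan_below by auto
  have M: "?M \<in> carrier_mat m m"
    using dims by (intro carrier_matI) (simp_all only: dim_submatrix)
  have M_index: "?M $$ (i, j) = B $$ (i, j)" if "i < m" "j < m" for i j
    using that dims submatrix_index[of i B "{..<m}" j "{..<m}"] by (simp add: pick_lessThan)
  assume "det ?M = 0"
  then obtain v where v: "v \<in> carrier_vec m" "v \<noteq> 0\<^sub>v m" "?M *\<^sub>v v = 0\<^sub>v m"
    using det_0_iff_vec_prod_zero_field[OF M] by auto
  define w where "w c = (if c < m then v $ c else 0)" for c
  have harmonic: "(\<Sum>c<n. B $$ (r, c) * w c) = 0" if "r < m" for r
  proof -
    have "(\<Sum>c<n. B $$ (r, c) * w c) = (\<Sum>c<m. B $$ (r, c) * w c)"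
      using \<open>m \<le> n\<close> by (intro sum.mono_neutral_right) (auto simp: w_def)
    also have "\<dots> = (\<Sum>c<m. ?M $$ (r, c) * v $ c)"
      by (intro sum.cong) (auto simp: M_index w_def that)
    also have "\<dots> = (?M *\<^sub>v v) $ r"
      using M v(1) that by (simp add: scalar_prod_def lessThan_atLeast0)
    finally show ?thesis using v(3) that by simp
  qed
  have "w c = 0" if "c < m" for c
  proof (rule Z_matrix_maximum_principle[where B = B and m = m and n = n])
    show "c < n" using that \<open>m \<le> n\<close> by simp
  qed (use harmonic in \<open>auto simp: w_def offdiag row_sums later_neg\<close>)
  then have "v = 0\<^sub>v m" using v(1) by (intro eq_vecI) (auto simp: w_def)
  with v(2) show False ..
qed

lemma rank_Z_matrix_zero_row_sums:
  fixes B :: "real mat"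
  assumes B: "B \<in> carrier_mat n n" and "n > 0"
    and offdiag: "\<And>r c. r < n \<Longrightarrow> c < n \<Longrightarrow> c \<noteq> r \<Longrightarrow> B $$ (r, c) \<le> 0"
    and row_sums: "\<And>r. r < n \<Longrightarrow> (\<Sum>c<n. B $$ (r, c)) = 0"
    and later_neg: "\<And>r. Suc r < n \<Longrightarrow> \<exists>c. r < c \<and> c < n \<and> B $$ (r, c) < 0"
  shows "vec_space.rank n B = n - 1"
proof -
  have "vec_space.rank n B < n"
    using vec_space.det_zero_low_rank[OF B det_zero_if_row_sums_zero[OF B \<open>n > 0\<close> row_sums]] .
  moreover have "det (submatrix B {..<n - 1} {..<n - 1}) \<noteq> 0"
    using B offdiag row_sums later_neg
    by (intro Z_matrix_leading_minor_det_nonzero) auto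
  then have "n - 1 \<le> vec_space.rank n B"
    using vec_space.rank_gt_minor[OF B] card_lessThan_below[of "n - 1" n] by fastforce
  ultimately show ?thesis by linarith
qed

lemma matB_carrier: "matB p t u \<in> carrier_mat (p^2) (p^2)"
  unfolding matB_def by simp

lemma matB_index:
  "r < p^2 \<Longrightarrow> c < p^2 \<Longrightarrow>
    matB p t u $$ (r, c) = coeffA p t u (c div p + 1) (c mod p + 1) (r div p + 1) (r mod p + 1)"
  unfolding matB_def by simp

lemma coeffA_offdiag_nonpos:
  assumes "(i, j) \<noteq> (k, l)" "0 \<le> t" "0 \<le> u"
  shows "coeffA p t u i j k l \<le> 0"
proof -
  have diagonal: "iv (k = i \<and> l = j) = 0" using assms(1) by (auto simp: iv_def)
  have "0 \<le> iv (k = j \<and> l = i) * dd t i j"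
    using \<open>0 \<le> t\<close> by (simp add: iv_def dd_def)
  moreover have "0 \<le> u * iv (i > 1 \<and> k + 1 = i \<and> l = j)" "0 \<le> u * iv (j > 1 \<and> k = i \<and> l + 1 = j)"
    using \<open>0 \<le> u\<close> by (simp_all add: iv_def)
  moreover have "0 \<le> iv (i < p \<and> k = i + 1 \<and> l = j)" "0 \<le> iv (j < p \<and> k = i \<and> l = j + 1)"
    by (simp_all add: iv_def)
  ultimately show ?thesis unfolding coeffA_def diagonal by linarith
qed

lemma coeffA_left_neighbour:
  assumes "0 < l" shows "coeffA p t u k (Suc l) k l = - u"
proof -
  have "iv (k = Suc l \<and> l = k) = 0" by (simp add: iv_def)
  then show ?thesis using assms unfolding coeffA_def by (simp add: iv_def)
qed

lemma coeffA_upper_neighbour: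
  assumes "0 < k" shows "coeffA p t u (Suc k) l k l = - u"
proof -
  have "iv (k = l \<and> l = Suc k) = 0" by (simp add: iv_def)
  then show ?thesis using assms unfolding coeffA_def by (simp add: iv_def)
qed

lemma coeffA_as_deltas:
  assumes "1 \<le> k" "k \<le> p" "1 \<le> l" "l \<le> p" "1 \<le> i" "1 \<le> j"
  shows "coeffA p t u i j k l =
     (if (i, j) = (k, l) then cc t k l + iv (k > 1) + iv (l > 1) + u * iv (k < p) + u * iv (l < p) else 0)
   - (if (i, j) = (l, k) then dd t l k else 0)
   - (if (i, j) = (k - 1, l) then iv (k > 1) else 0)
   - (if (i, j) = (k, l - 1) then iv (l > 1) else 0)
   - (if (i, j) = (k + 1, l) then u else 0)
   - (if (i, j) = (k, l + 1) then u else 0)"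
proof -
  have "iv (k = i \<and> l = j) * (cc t i j + iv (i > 1) + iv (j > 1) + u * iv (i < p) + u * iv (j < p))
      = (if (i, j) = (k, l) then cc t k l + iv (k > 1) + iv (l > 1) + u * iv (k < p) + u * iv (l < p) else 0)"
    and "iv (k = j \<and> l = i) * dd t i j = (if (i, j) = (l, k) then dd t l k else 0)"
    and "iv (i < p \<and> k = i + 1 \<and> l = j) = (if (i, j) = (k - 1, l) then iv (k > 1) else 0)"
    and "iv (j < p \<and> k = i \<and> l = j + 1) = (if (i, j) = (k, l - 1) then iv (l > 1) else 0)"
    and "u * iv (i > 1 \<and> k + 1 = i \<and> l = j) = (if (i, j) = (k + 1, l) then u else 0)"
    and "u * iv (j > 1 \<and> k = i \<and> l + 1 = j) = (if (i, j) = (k, l + 1) then u else 0)"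
    using assms by (auto simp: iv_def)
  then show ?thesis unfolding coeffA_def by (simp only:)
qed

lemma sum_coeffA_over_forms:
  assumes "1 \<le> k" "k \<le> p" "1 \<le> l" "l \<le> p"
  shows "(\<Sum>(i, j)\<in>{1..p}\<times>{1..p}. coeffA p t u i j k l) = 0"
proof -
  let ?S = "{1..p}\<times>{1..p}"
  have "(\<Sum>(i, j)\<in>?S. coeffA p t u i j k l) = (\<Sum>x\<in>?S.
     (if x = (k, l) then cc t k l + iv (k > 1) + iv (l > 1) + u * iv (k < p) + u * iv (l < p) else 0)
   - (if x = (l, k) then dd t l k else 0)
   - (if x = (k - 1, l) then iv (k > 1) else 0)
   - (if x = (k, l - 1) then iv (l > 1) else 0)
   - (if x = (k + 1, l) then u else 0)
   - (if x = (k, l + 1) then u else 0))"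
    by (intro sum.cong refl)
      (clarsimp simp only: mem_Sigma_iff atLeastAtMost_iff prod.case coeffA_as_deltas[OF assms])
  also have "\<dots> = 0"
    using assms
    by (simp only: sum_subtractf sum.delta finite_SigmaI finite_atLeastAtMost)
      (auto simp: iv_def cc_def dd_def)
  finally show ?thesis .
qed

lemma sum_lessThan_square_div_mod:
  fixes p :: nat
  assumes "0 < p"
  shows "(\<Sum>c<p^2. g (c div p + 1, c mod p + 1)) = (\<Sum>x\<in>{1..p}\<times>{1..p}. g x)"
proof (rule sum.reindex_bij_witness[where i = "\<lambda>(i, j). (i - 1) * p + (j - 1)"
      and j = "\<lambda>c. (c div p + 1, c mod p + 1)"])
  fix c assume "c \<in> {..<p^2}"
  then show "(c div p + 1, c mod p + 1) \<in> {1..p}\<times>{1..p}"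
    using assms by (auto simp: power2_eq_square less_mult_imp_div_less Suc_leI)
next
  fix x assume "x \<in> {1..p}\<times>{1..p}"
  then obtain a b where x: "x = (Suc a, Suc b)" and "a < p" "b < p"
    by (cases x) (auto dest!: Suc_le_D)
  have "a * p + b < Suc a * p" using \<open>b < p\<close> by simp
  also have "\<dots> \<le> p * p" using \<open>a < p\<close> by (intro mult_le_mono1) simp
  finally show "(\<lambda>(i, j). (i - 1) * p + (j - 1)) x \<in> {..<p^2}"
    by (simp add: x power2_eq_square)
  show "((\<lambda>(i, j). (i - 1) * p + (j - 1)) x div p + 1, (\<lambda>(i, j). (i - 1) * p + (j - 1)) x mod p + 1) = x"
    using \<open>b < p\<close> by (simp add: x)
qed simp_all

lemma matB_row_sum:
  assumes "0 < p" "r < p^2"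
  shows "(\<Sum>c<p^2. matB p t u $$ (r, c)) = 0"
proof -
  have "r div p + 1 \<le> p" "r mod p + 1 \<le> p"
    using assms by (auto simp: power2_eq_square less_mult_imp_div_less Suc_leI)
  then have "(\<Sum>(i, j)\<in>{1..p}\<times>{1..p}. coeffA p t u i j (r div p + 1) (r mod p + 1)) = 0"
    by (intro sum_coeffA_over_forms) auto
  then show ?thesis
    using sum_lessThan_square_div_mod[OF \<open>0 < p\<close>,
        of "\<lambda>(i, j). coeffA p t u i j (r div p + 1) (r mod p + 1)"]
    by (simp add: matB_index \<open>r < p^2\<close>)
qed

lemma matB_offdiag_nonpos:
  assumes "0 \<le> t" "0 \<le> u" "r < p^2" "c < p^2" "c \<noteq> r"
  shows "matB p t u $$ (r, c) \<le> 0"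
proof -
  have "(c div p, c mod p) \<noteq> (r div p, r mod p)"
    using \<open>c \<noteq> r\<close> by (metis div_mult_mod_eq prod.inject)
  then show ?thesis
    using assms by (simp add: matB_index coeffA_offdiag_nonpos)
qed

lemma matB_neg_entry_after_diagonal:
  fixes p :: nat
  assumes "0 < u" "Suc r < p^2"
  shows "\<exists>c. r < c \<and> c < p^2 \<and> matB p t u $$ (r, c) < 0"
proof (cases "Suc (r mod p) < p")
  case True
  then have "Suc r div p = r div p" "Suc r mod p = Suc (r mod p)"
    by (simp_all add: div_Suc mod_Suc)
  then have "matB p t u $$ (r, Suc r) = - u"
    using assms by (simp add: matB_index coeffA_left_neighbour)
  then show ?thesis using assms by (intro exI[of _ "Suc r"]) simp
next
  case False
  have "0 < p" using assms by (cases p) auto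
  define q where "q = r div p"
  have "r mod p = p - 1" using False mod_less_divisor[OF \<open>0 < p\<close>, of r] by linarith
  then have r_eq: "r = q * p + (p - 1)"
    unfolding q_def using div_mult_mod_eq[of r p] by simp
  then have "Suc q * p < p * p"
    using \<open>0 < p\<close> \<open>Suc r < p^2\<close> by (simp add: power2_eq_square)
  then have "Suc q < p" using mult_less_cancel2 by blast
  then have "(q + 2) * p \<le> p * p" by (intro mult_le_mono1) simp
  then have "r + p < p^2"
    using r_eq \<open>0 < p\<close> by (simp add: power2_eq_square algebra_simps)
  moreover have "(r + p) div p = Suc q" "(r + p) mod p = r mod p"
    unfolding q_def using \<open>0 < p\<close> by simp_all
  ultimately show ?thesis
    using assms \<open>0 < p\<close>
    by (intro exI[of _ "r + p"]) (simp add: matB_index coeffA_upper_neighbour q_def)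
qed

theorem mainTheorem4:
  fixes p :: nat and t u :: real
  assumes "p \<ge> 2" and "0 \<le> t" and "t \<le> 1" and "u > 0"
  shows "vec_space.rank (p^2) (matB p t u) = p^2 - 1"
proof (rule rank_Z_matrix_zero_row_sums[OF matB_carrier])
  show "0 < p^2" using \<open>p \<ge> 2\<close> by simp
  show "matB p t u $$ (r, c) \<le> 0" if "r < p^2" "c < p^2" "c \<noteq> r" for r c
    using matB_offdiag_nonpos that assms by simp
  show "(\<Sum>c<p^2. matB p t u $$ (r, c)) = 0" if "r < p^2" for r
    using matB_row_sum that assms by simp
  show "\<exists>c. r < c \<and> c < p^2 \<and> matB p t u $$ (r, c) < 0" if "Suc r < p^2" for r
    using matB_neg_entry_after_diagonal that assms by simp
qed

end
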